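(* Let $z_1,z_2,z_3$ be the (physical, real) coupling variables $z_i=\tanh K_i$ of the anisotropic triangular Ising model, and set $v_i=e^{-2K_i}=\frac{1-z_i}{1+z_i}$ for $i=1,2,3$. Define $$a=2z_3(1+z_1^2)(1+z_2^2)+4z_1z_2(1+z_3^2),\qquad c=(1-z_1^2)(1-z_2^2),\qquad b=z_3^2c,$$ and the Toeplitz matrix elements (Fourier coefficients) $$w_n=\int_{-\pi}^{\pi}\frac{d\theta}{2\pi}\,\frac{a\cos(n\theta)-b\cos((n-1)\theta)-c\cos((n+1)\theta)}{\sqrt{a^2+b^2+c^2-2a(b+c)\cos\theta+2bc\cos(2\theta)}},\qquad n\in\mathbb Z,$$ i.e. the Fourier coefficients of $w(\zeta)=\left(\frac{a-b\zeta-c\zeta^{-1}}{a-b\zeta^{-1}-c\zeta}\right)^{1/2}$ on $|\zeta|=1$. Let $\Gamma=1+v_1^2v_2^2-(v_1^2+v_2^2)v_3^2$. Then for every $n\in\mathbb Z$, \begin{multline*} (n-3)v_1^2v_2^2(1-v_3^2)^2w_{n-3}-2v_1v_2\Gamma\left[v_3+(n-2)(1+v_3^2)\right]w_{n-2}\\ +\Big[(n-1)(v_1^4+4v_1^2v_2^2+v_2^4)v_3^4-2(n-1)\left(v_1^2+v_2^2-6v_1^2v_2^2+v_1^4v_2^2+v_1^2v_2^4\right)v_3^2\\ +(n-1)(1+4v_1^2v_2^2+v_1^4v_2^4)+8v_1^2v_2^2v_3(1+v_3^2)\Big]w_{n-1}\\ -2v_1v_2\Gamma\left[v_3+n(1+v_3^2)\right]w_n+(n+1)v_1^2v_2^2(1-v_3^2)^2w_{n+1}=0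 . \end{multline*} In particular, for $n=-1$ and $n=3$ this relation involves only four consecutive terms (it is of third order).
   Context: The anisotropic triangular Ising model has nearest-neighbour couplings $K_1$ (horizontal), $K_2$ (vertical) and $K_3$ (up-right diagonal) on a square grid; $z_i=\tanh K_i\in[-1,1]$ and $v_i=e^{-2K_i}\in[0,\infty)$. The couplings are assumed such that the square root in the integrand is nonvanishing on $\theta\in[-\pi,\pi]$ (positive branch), so that the $w_n$ are well defined. *)

theory Defs
  imports "HOL-Analysis.Analysis"
begin

definition tri_v :: "real \<Rightarrow> real" where
  "tri_v z = (1 - z) / (1 + z)"

definition tri_a :: "real \<Rightarrow> real \<Rightarrow> real \<Rightarrow> real" where
  "tri_a z1 z2 z3 = 2 * z3 * (1 + z1^2) * (1 + z2^2) + 4 * z1 * z2 * (1 + z3^2)"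

definition tri_c :: "real \<Rightarrow> real \<Rightarrow> real \<Rightarrow> real" where
  "tri_c z1 z2 z3 = (1 - z1^2) * (1 - z2^2)"

definition tri_b :: "real \<Rightarrow> real \<Rightarrow> real \<Rightarrow> real" where
  "tri_b z1 z2 z3 = z3^2 * tri_c z1 z2 z3"

definition tri_rad :: "real \<Rightarrow> real \<Rightarrow> real \<Rightarrow> real \<Rightarrow> real" where
  "tri_rad z1 z2 z3 \<theta> =
     (let a = tri_a z1 z2 z3; b = tri_b z1 z2 z3; c = tri_c z1 z2 z3 in
      a^2 + b^2 + c^2 - 2 * a * (b + c) * cos \<theta> + 2 * b * c * cos (2 * \<theta>))"

definition tri_w :: "real \<Rightarrow> real \<Rightarrow> real \<Rightarrow> int \<Rightarrow> real" where
  "tri_w z1 z2 z3 n =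
     (let a = tri_a z1 z2 z3; b = tri_b z1 z2 z3; c = tri_c z1 z2 z3 in
      integral {-pi..pi} (\<lambda>\<theta>.
        (a * cos (of_int n * \<theta>) - b * cos (of_int (n - 1) * \<theta>)
           - c * cos (of_int (n + 1) * \<theta>)) / sqrt (tri_rad z1 z2 z3 \<theta>)) / (2 * pi))"

end

theory Submission
  imports Defs
begin

text \<open>
  Write \<open>w\<^sub>k = (2\<pi>)\<^sup>-\<^sup>1 \<integral> N\<^sub>k / \<surd>R\<close> with numerator
  \<open>N\<^sub>k(t) = a cos kt - b cos (k-1)t - c cos (k+1)t\<close> and radicand \<open>R\<close>.
  The function \<open>P\<^sub>m(t) = (-a sin mt + b sin (m-1)t + c sin (m+1)t) \<surd>R(t)\<close> vanishes at
  \<open>\<plusminus>\<pi>\<close>, and a trigonometric identity shows that \<open>P\<^sub>m'\<close> is a fixed linear combination of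
  \<open>N\<^sub>m\<^sub>-\<^sub>2/\<surd>R, \<dots>, N\<^sub>m\<^sub>+\<^sub>2/\<surd>R\<close> with coefficients polynomial in \<open>a, b, c, m\<close>.
  Integrating over \<open>[-\<pi>, \<pi>]\<close> gives a five-term recurrence for \<open>w\<close> in terms of \<open>a, b, c\<close>.
  Expressing \<open>z\<^sub>i = (1 - v\<^sub>i)/(1 + v\<^sub>i)\<close>, each coefficient becomes that of the
  stated relation multiplied by \<open>-((1+z\<^sub>1)(1+z\<^sub>2)(1+z\<^sub>3))\<^sup>4/16\<close>.
\<close>

definition toeplitz_radicand :: "real \<Rightarrow> real \<Rightarrow> real \<Rightarrow> real \<Rightarrow> real" where
  "toeplitz_radicand a b c t = a^2 + b^2 + c^2 - 2*a*(b + c)*cos t + 2*b*c*cos (2*t)"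

definition toeplitz_numerator :: "real \<Rightarrow> real \<Rightarrow> real \<Rightarrow> int \<Rightarrow> real \<Rightarrow> real" where
  "toeplitz_numerator a b c k t =
     a*cos (of_int k*t) - b*cos (of_int (k - 1)*t) - c*cos (of_int (k + 1)*t)"

definition five_term_combination :: "real \<Rightarrow> real \<Rightarrow> real \<Rightarrow> int \<Rightarrow> (int \<Rightarrow> real) \<Rightarrow> real" where
  "five_term_combination a b c m f =
     b*c*(2 - of_int m)*f (m - 2)
     + a*((of_int m - 3/2)*b + (of_int m - 1/2)*c)*f (m - 1)
     + (b^2 - c^2 - of_int m*(a^2 + b^2 + c^2))*f m
     + a*((of_int m + 1/2)*b + (of_int m + 3/2)*c)*f (m + 1)
     - b*c*(of_int m + 2)*f (m + 2)"

lemma five_term_combination_divide: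
  "five_term_combination a b c m (\<lambda>k. f k / r) = five_term_combination a b c m f / r"
  by (simp add: five_term_combination_def add_divide_distrib diff_divide_distrib)

lemma toeplitz_radicand_sum_squares:
  "toeplitz_radicand a b c t = (a - (b + c)*cos t)^2 + ((b - c)* sin t)^2"
  unfolding toeplitz_radicand_def cos_double using sin_cos_squared_add[of t] by algebra

lemma toeplitz_radicand_nonneg: "toeplitz_radicand a b c t \<ge> 0"
  by (simp add: toeplitz_radicand_sum_squares)

lemma continuous_on_toeplitz_radicand: "continuous_on S (toeplitz_radicand a b c)"
  unfolding toeplitz_radicand_def[abs_def] by (intro continuous_intros)

lemma has_real_derivative_toeplitz_radicand:
  "(toeplitz_radicand a b c has_real_derivative 2*a*(b + c)* sin t - 4*b*c* sin (2*t)) (at t)"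
  unfolding toeplitz_radicand_def[abs_def] by (auto intro!: derivative_eq_intros)

lemma sin_triple: "sin (3*t) = 3 * sin t - 4 * sin t ^ 3" for t :: real
proof -
  have "sin (3*t) = sin (2*t) * cos t + cos (2*t) * sin t"
    using sin_add[of "2*t" t] by simp
  also have "\<dots> = sin t * (4 * cos t ^ 2 - 1)"
    unfolding sin_double cos_double_cos by (simp add: algebra_simps power2_eq_square)
  also have "\<dots> = 3 * sin t - 4 * sin t ^ 3"
    by (simp only: cos_squared_eq) (simp add: algebra_simps power2_eq_square power3_eq_cube)
  finally show ?thesis .
qed

lemma five_term_trig_identity:
  fixes a b c M x t :: real
  shows "(-a*M*cos x + b*(M - 1)*cos (x - t) + c*(M + 1)*cos (x + t)) * toeplitz_radicand a b c t
     + (-a * sin x + b * sin (x - t) + c * sin (x + t)) * (2*a*(b + c) * sin t - 4*b*c * sin (2*t)) / 2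
   = b*c*(2 - M)*(a*cos (x - 2*t) - b*cos (x - 3*t) - c*cos (x - t))
     + a*((M - 3/2)*b + (M - 1/2)*c)*(a*cos (x - t) - b*cos (x - 2*t) - c*cos x)
     + (b^2 - c^2 - M*(a^2 + b^2 + c^2))*(a*cos x - b*cos (x - t) - c*cos (x + t))
     + a*((M + 1/2)*b + (M + 3/2)*c)*(a*cos (x + t) - b*cos x - c*cos (x + 2*t))
     - b*c*(M + 2)*(a*cos (x + 2*t) - b*cos (x + t) - c*cos (x + 3*t))"
proof -
  have shift: "\<And>k. cos (x - k) = cos x * cos k + sin x * sin k"
    "\<And>k. cos (x + k) = cos x * cos k - sin x * sin k"
    "\<And>k. sin (x - k) = sin x * cos k - cos x * sin k"
    "\<And>k. sin (x + k) = sin x * cos k + cos x * sin k"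
    by (simp_all add: cos_diff cos_add sin_diff sin_add)
  show ?thesis
    unfolding toeplitz_radicand_def shift cos_double_cos sin_double cos_treble_cos sin_triple
    using sin_squared_eq[of t] by algebra
qed

lemma five_term_combination_toeplitz_numerator:
  fixes m :: int
  defines "M \<equiv> of_int m :: real"
  shows "five_term_combination a b c m (\<lambda>k. toeplitz_numerator a b c k t)
    = (-a*M*cos (M*t) + b*(M - 1)*cos (M*t - t) + c*(M + 1)*cos (M*t + t)) * toeplitz_radicand a b c t
      + (-a * sin (M*t) + b * sin (M*t - t) + c * sin (M*t + t))
        * (2*a*(b + c) * sin t - 4*b*c * sin (2*t)) / 2"
  unfolding five_term_trig_identity five_term_combination_def toeplitz_numerator_def M_def
  by (simp add: algebra_simps)

definition toeplitz_potential :: "real \<Rightarrow> real \<Rightarrow> real \<Rightarrow> int \<Rightarrow> real \<Rightarrow> real" where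
  "toeplitz_potential a b c m t =
     (-a * sin (of_int m*t) + b * sin (of_int m*t - t) + c * sin (of_int m*t + t))
     * sqrt (toeplitz_radicand a b c t)"

lemma toeplitz_potential_at_pi: "toeplitz_potential a b c m pi = 0" "toeplitz_potential a b c m (-pi) = 0"
  using sin_npi_int[of m] by (simp_all add: toeplitz_potential_def sin_diff sin_add mult.commute)

lemma has_real_derivative_toeplitz_potential:
  assumes pos: "toeplitz_radicand a b c t > 0"
  shows "(toeplitz_potential a b c m has_real_derivative
      five_term_combination a b c m (\<lambda>k. toeplitz_numerator a b c k t / sqrt (toeplitz_radicand a b c t)))
      (at t)"
proof -
  define M where "M = (of_int m :: real)"
  define R where "R = toeplitz_radicand a b c t"
  define R' where "R' = 2*a*(b + c) * sin t - 4*b*c * sin (2*t)"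
  define T where "T = -a * sin (M*t) + b * sin (M*t - t) + c * sin (M*t + t)"
  define T' where "T' = -a*M*cos (M*t) + b*(M - 1)*cos (M*t - t) + c*(M + 1)*cos (M*t + t)"
  have sqrt_pos: "sqrt R > 0"
    using pos by (simp add: R_def)
  have sin_part: "((\<lambda>t. -a * sin (M*t) + b * sin (M*t - t) + c * sin (M*t + t)) has_real_derivative T') (at t)"
    unfolding T'_def by (auto intro!: derivative_eq_intros simp: algebra_simps)
  have sqrt_part: "((\<lambda>t. sqrt (toeplitz_radicand a b c t)) has_real_derivative inverse (sqrt R) / 2 * R') (at t)"
    unfolding R_def R'_def
    by (rule DERIV_chain2[OF DERIV_real_sqrt[OF pos] has_real_derivative_toeplitz_radicand])
  have "(toeplitz_potential a b c m has_real_derivative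
      T' * sqrt R + inverse (sqrt R) / 2 * R' * T) (at t)"
    using DERIV_mult[OF sin_part sqrt_part]
    by (simp add: toeplitz_potential_def[abs_def] M_def R_def T_def)
  moreover have "T' * sqrt R + inverse (sqrt R) / 2 * R' * T = (T' * R + T * R' / 2) / sqrt R"
    using sqrt_pos by (simp add: field_simps flip: power2_eq_square)
  moreover have "five_term_combination a b c m (\<lambda>k. toeplitz_numerator a b c k t / sqrt R)
      = (T' * R + T * R' / 2) / sqrt R"
    unfolding five_term_combination_divide five_term_combination_toeplitz_numerator
      T_def T'_def R_def R'_def M_def ..
  ultimately show ?thesis
    by (simp add: R_def)
qed

lemma has_integral_five_term_combination:
  assumes "\<And>k. (f k has_integral I k) S"
  shows "((\<lambda>t. five_term_combination a b c m (\<lambda>k. f k t)) has_integral five_term_combination a b c m I) S"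
  unfolding five_term_combination_def
  by (intro has_integral_add has_integral_diff has_integral_mult_right assms)

definition toeplitz_coefficient :: "real \<Rightarrow> real \<Rightarrow> real \<Rightarrow> int \<Rightarrow> real" where
  "toeplitz_coefficient a b c k =
     integral {-pi..pi} (\<lambda>t. toeplitz_numerator a b c k t / sqrt (toeplitz_radicand a b c t)) / (2*pi)"

lemma toeplitz_coefficient_recurrence:
  assumes nonzero: "\<forall>t\<in>{-pi..pi}. toeplitz_radicand a b c t \<noteq> 0"
  shows "five_term_combination a b c m (toeplitz_coefficient a b c) = 0"
proof -
  define F where "F k t = toeplitz_numerator a b c k t / sqrt (toeplitz_radicand a b c t)" for k t
  have pos: "toeplitz_radicand a b c t > 0" if "t \<in> {-pi..pi}" for t
    using nonzero that toeplitz_radicand_nonneg[of a b c t] by force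
  have "continuous_on {-pi..pi} (F k)" for k
    unfolding F_def[abs_def] toeplitz_numerator_def
    using pos continuous_on_toeplitz_radicand
    by (intro continuous_intros) (auto simp: less_imp_neq[symmetric])
  then have integrals: "(F k has_integral integral {-pi..pi} (F k)) {-pi..pi}" for k
    using integrable_continuous_interval by blast
  have "((\<lambda>t. five_term_combination a b c m (\<lambda>k. F k t)) has_integral
      toeplitz_potential a b c m pi - toeplitz_potential a b c m (-pi)) {-pi..pi}"
    using pos unfolding F_def
    by (intro fundamental_theorem_of_calculus)
      (auto simp: has_real_derivative_iff_has_vector_derivative[symmetric]
        intro!: has_field_derivative_at_within has_real_derivative_toeplitz_potential)
  then have "five_term_combination a b c m (\<lambda>k. integral {-pi..pi} (F k)) = 0"
    using has_integral_unique[OF has_integral_five_term_combination[OF integrals]]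
    by (simp add: toeplitz_potential_at_pi)
  then show ?thesis
    using five_term_combination_divide[of a b c m "\<lambda>k. integral {-pi..pi} (F k)" "2*pi"]
    by (simp add: toeplitz_coefficient_def[abs_def] F_def[abs_def])
qed

lemma tri_v_mult: "-1 < z \<Longrightarrow> tri_v z * (1 + z) = 1 - z"
  by (simp add: tri_v_def)

lemma tri_coefficients_in_v:
  fixes z1 z2 z3 v1 v2 v3 :: real
  assumes v: "v1 * (1 + z1) = 1 - z1" "v2 * (1 + z2) = 1 - z2" "v3 * (1 + z3) = 1 - z3"
  defines "\<Gamma> \<equiv> 1 + v1^2 * v2^2 - (v1^2 + v2^2) * v3^2"
    and "a \<equiv> tri_a z1 z2 z3" and "b \<equiv> tri_b z1 z2 z3" and "c \<equiv> tri_c z1 z2 z3"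
    and "D \<equiv> ((1 + z1) * (1 + z2) * (1 + z3))^4"
  shows "D * (v1^2 * v2^2 * (1 - v3^2)^2) = 16*b*c"
    and "D * (2 * v1 * v2 * \<Gamma> * (1 + v3^2)) = 16*a*(b + c)"
    and "D * (2 * v1 * v2 * \<Gamma> * v3) = 8*a*(c - b)"
    and "D * ((v1^4 + 4 * v1^2 * v2^2 + v2^4) * v3^4
         - 2 * (v1^2 + v2^2 - 6 * v1^2 * v2^2 + v1^4 * v2^2 + v1^2 * v2^4) * v3^2
         + (1 + 4 * v1^2 * v2^2 + v1^4 * v2^4)) = 16*(a^2 + b^2 + c^2)"
    and "D * (8 * v1^2 * v2^2 * v3 * (1 + v3^2)) = -16*(b^2 - c^2)"
proof -
  note abc = a_def b_def c_def tri_a_def tri_b_def tri_c_def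
  show "D * (v1^2 * v2^2 * (1 - v3^2)^2) = 16*b*c"
    unfolding abc D_def using v by algebra
  show "D * (2 * v1 * v2 * \<Gamma> * (1 + v3^2)) = 16*a*(b + c)"
    unfolding abc D_def \<Gamma>_def using v by algebra
  show "D * (2 * v1 * v2 * \<Gamma> * v3) = 8*a*(c - b)"
    unfolding abc D_def \<Gamma>_def using v by algebra
  show "D * ((v1^4 + 4 * v1^2 * v2^2 + v2^4) * v3^4
         - 2 * (v1^2 + v2^2 - 6 * v1^2 * v2^2 + v1^4 * v2^2 + v1^2 * v2^4) * v3^2
         + (1 + 4 * v1^2 * v2^2 + v1^4 * v2^4)) = 16*(a^2 + b^2 + c^2)"
    unfolding abc D_def using v by algebra
  show "D * (8 * v1^2 * v2^2 * v3 * (1 + v3^2)) = -16*(b^2 - c^2)"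
    unfolding abc D_def using v by algebra
qed

definition tri_recurrence_lhs :: "real \<Rightarrow> real \<Rightarrow> real \<Rightarrow> (int \<Rightarrow> real) \<Rightarrow> int \<Rightarrow> real" where
  "tri_recurrence_lhs v1 v2 v3 w n =
    (let \<Gamma> = 1 + v1^2 * v2^2 - (v1^2 + v2^2) * v3^2 in
      of_int (n - 3) * v1^2 * v2^2 * (1 - v3^2)^2 * w (n - 3)
      - 2 * v1 * v2 * \<Gamma> * (v3 + of_int (n - 2) * (1 + v3^2)) * w (n - 2)
      + (of_int (n - 1) * (v1^4 + 4 * v1^2 * v2^2 + v2^4) * v3^4
         - 2 * of_int (n - 1) * (v1^2 + v2^2 - 6 * v1^2 * v2^2 + v1^4 * v2^2 + v1^2 * v2^4) * v3^2
         + of_int (n - 1) * (1 + 4 * v1^2 * v2^2 + v1^4 * v2^4)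
         + 8 * v1^2 * v2^2 * v3 * (1 + v3^2)) * w (n - 1)
      - 2 * v1 * v2 * \<Gamma> * (v3 + of_int n * (1 + v3^2)) * w n
      + of_int (n + 1) * v1^2 * v2^2 * (1 - v3^2)^2 * w (n + 1))"

lemma tri_recurrence_lhs_eq_five_term_combination:
  fixes z1 z2 z3 v1 v2 v3 :: real
  assumes v: "v1 * (1 + z1) = 1 - z1" "v2 * (1 + z2) = 1 - z2" "v3 * (1 + z3) = 1 - z3"
  defines "\<Gamma> \<equiv> 1 + v1^2 * v2^2 - (v1^2 + v2^2) * v3^2"
    and "a \<equiv> tri_a z1 z2 z3" and "b \<equiv> tri_b z1 z2 z3" and "c \<equiv> tri_c z1 z2 z3"
    and "D \<equiv> ((1 + z1) * (1 + z2) * (1 + z3))^4"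
  shows "D * tri_recurrence_lhs v1 v2 v3 w n = -16 * five_term_combination a b c (n - 1) w"
proof -
  note coefficients = tri_coefficients_in_v[OF v, folded \<Gamma>_def a_def b_def c_def D_def]
  have "D * tri_recurrence_lhs v1 v2 v3 w n
    = of_int (n - 3) * (D * (v1^2 * v2^2 * (1 - v3^2)^2)) * w (n - 3)
      - (D * (2 * v1 * v2 * \<Gamma> * v3) + of_int (n - 2) * (D * (2 * v1 * v2 * \<Gamma> * (1 + v3^2)))) * w (n - 2)
      + (of_int (n - 1) * (D * ((v1^4 + 4 * v1^2 * v2^2 + v2^4) * v3^4
         - 2 * (v1^2 + v2^2 - 6 * v1^2 * v2^2 + v1^4 * v2^2 + v1^2 * v2^4) * v3^2
         + (1 + 4 * v1^2 * v2^2 + v1^4 * v2^4))) + D * (8 * v1^2 * v2^2 * v3 * (1 + v3^2))) * w (n - 1)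
      - (D * (2 * v1 * v2 * \<Gamma> * v3) + of_int n * (D * (2 * v1 * v2 * \<Gamma> * (1 + v3^2)))) * w n
      + of_int (n + 1) * (D * (v1^2 * v2^2 * (1 - v3^2)^2)) * w (n + 1)"
    unfolding tri_recurrence_lhs_def Let_def \<Gamma>_def by algebra
  also have "\<dots> = -16 * five_term_combination a b c (n - 1) w"
    unfolding coefficients five_term_combination_def by (simp add: algebra_simps)
  finally show ?thesis .
qed

theorem corollary2:
  fixes z1 z2 z3 :: real and n :: int
  assumes hz1: "-1 < z1" "z1 \<le> 1"
    and hz2: "-1 < z2" "z2 \<le> 1"
    and hz3: "-1 < z3" "z3 \<le> 1"
    and hrad: "\<forall>\<theta>\<in>{-pi..pi}. tri_rad z1 z2 z3 \<theta> \<noteq> 0"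
  shows
   "(let v1 = tri_v z1; v2 = tri_v z2; v3 = tri_v z3; w = tri_w z1 z2 z3;
         \<Gamma> = 1 + v1^2 * v2^2 - (v1^2 + v2^2) * v3^2 in
      of_int (n - 3) * v1^2 * v2^2 * (1 - v3^2)^2 * w (n - 3)
      - 2 * v1 * v2 * \<Gamma> * (v3 + of_int (n - 2) * (1 + v3^2)) * w (n - 2)
      + (of_int (n - 1) * (v1^4 + 4 * v1^2 * v2^2 + v2^4) * v3^4
         - 2 * of_int (n - 1) * (v1^2 + v2^2 - 6 * v1^2 * v2^2 + v1^4 * v2^2 + v1^2 * v2^4) * v3^2
         + of_int (n - 1) * (1 + 4 * v1^2 * v2^2 + v1^4 * v2^4)
         + 8 * v1^2 * v2^2 * v3 * (1 + v3^2)) * w (n - 1)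
      - 2 * v1 * v2 * \<Gamma> * (v3 + of_int n * (1 + v3^2)) * w n
      + of_int (n + 1) * v1^2 * v2^2 * (1 - v3^2)^2 * w (n + 1)) = 0"
proof -
  define a b c where "a = tri_a z1 z2 z3" and "b = tri_b z1 z2 z3" and "c = tri_c z1 z2 z3"
  have rad: "tri_rad z1 z2 z3 = toeplitz_radicand a b c"
    by (simp add: fun_eq_iff tri_rad_def toeplitz_radicand_def a_def b_def c_def Let_def)
  have "tri_w z1 z2 z3 = toeplitz_coefficient a b c"
    by (simp add: fun_eq_iff tri_w_def toeplitz_coefficient_def toeplitz_numerator_def rad
        a_def b_def c_def Let_def)
  then have "five_term_combination a b c (n - 1) (tri_w z1 z2 z3) = 0"
    using hrad by (simp add: rad toeplitz_coefficient_recurrence)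
  moreover have "((1 + z1) * (1 + z2) * (1 + z3))^4 \<noteq> 0"
    using hz1 hz2 hz3 by simp
  ultimately have "tri_recurrence_lhs (tri_v z1) (tri_v z2) (tri_v z3) (tri_w z1 z2 z3) n = 0"
    using tri_recurrence_lhs_eq_five_term_combination[OF tri_v_mult[OF hz1(1)]
        tri_v_mult[OF hz2(1)] tri_v_mult[OF hz3(1)], folded a_def b_def c_def]
    by (metis mult_eq_0_iff zero_neq_numeral mult_minus_left neg_equal_0_iff_equal)
  then show ?thesis
    unfolding tri_recurrence_lhs_def Let_def .
qed

end
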